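(* If $K$ is a smooth convex domain, then its depth satisfies $h_K>0$.
   Context: A convex domain is a compact convex subset $K\subset\mathbb{C}$ with nonempty interior; it is smooth if at each boundary point there is a unique supporting line. A unit vector $\nu$ is an outer normal to $K$ at $\zeta\in\partial K$ if $\mathrm{Re}((z-\zeta)\overline{\nu})\le 0$ for all $z\in K$; then $(\zeta+\nu\mathbb{R})\cap K=[\zeta,\zeta-h\nu]$ with $h\ge0$. The local depth $h_K(\zeta)$ is the maximum of such $h$ over all outer unit normals at $\zeta$, and the depth is $h_K:=\inf_{\zeta\in\partial K}h_K(\zeta)$. *)

theory Defs
  imports "HOL-Analysis.Analysis"
begin

definition convex_domain :: "complex set \<Rightarrow> bool" where
  "convex_domain K \<longleftrightarrow> compact K \<and> convex K \<and> interior K \<noteq> {}"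

definition supporting_line :: "complex set \<Rightarrow> complex \<Rightarrow> complex set \<Rightarrow> bool" where
  "supporting_line K \<zeta> L \<longleftrightarrow>
     (\<exists>\<nu>. norm \<nu> = 1 \<and> L = {z. Re ((z - \<zeta>) * cnj \<nu>) = 0} \<and>
          (\<forall>z\<in>K. Re ((z - \<zeta>) * cnj \<nu>) \<le> 0))"

definition smooth_convex_domain :: "complex set \<Rightarrow> bool" where
  "smooth_convex_domain K \<longleftrightarrow> convex_domain K \<and>
     (\<forall>\<zeta>\<in>frontier K. \<exists>!L. supporting_line K \<zeta> L)"

definition outer_normal :: "complex set \<Rightarrow> complex \<Rightarrow> complex \<Rightarrow> bool" where
  "outer_normal K \<zeta> \<nu> \<longleftrightarrow> norm \<nu> = 1 \<and> (\<forall>z\<in>K. Re ((z - \<zeta>) * cnj \<nu>) \<le> 0)"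

definition local_depth :: "complex set \<Rightarrow> complex \<Rightarrow> real" where
  "local_depth K \<zeta> = Sup {h. h \<ge> 0 \<and> (\<exists>\<nu>. outer_normal K \<zeta> \<nu> \<and>
      {\<zeta> + complex_of_real t * \<nu> | t. True} \<inter> K = closed_segment \<zeta> (\<zeta> - complex_of_real h * \<nu>))}"

definition depth :: "complex set \<Rightarrow> real" where
  "depth K = Inf (local_depth K ` frontier K)"

end

theory Submission
  imports Defs
begin

text \<open>At a boundary point \<open>\<zeta>\<close> of a smooth convex domain the outer unit normal \<open>\<nu>\<close> is unique.
  Hence the inward normal enters the interior, \<open>\<zeta> - s \<nu> \<in> interior K\<close> for some \<open>s > 0\<close>:
  otherwise a line separating the inward segment from the interior would be a second
  supporting line at \<open>\<zeta>\<close>. This is an open condition in \<open>(\<zeta>, \<nu>)\<close>, and the pairs of boundary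
  points with their outer normals form a compact set, so one \<open>s > 0\<close> works uniformly.
  By convexity every local depth is then at least \<open>s\<close>.\<close>

lemma Re_mult_cnj_eq_inner: "Re (w * cnj a) = inner w a"
  by (simp add: inner_complex_def)

lemma outer_normal_iff_inner:
  "outer_normal K \<zeta> \<nu> \<longleftrightarrow> norm \<nu> = 1 \<and> (\<forall>z\<in>K. inner (z - \<zeta>) \<nu> \<le> 0)"
  by (simp only: outer_normal_def Re_mult_cnj_eq_inner)

lemma outer_normal_sgnI:
  assumes "a \<noteq> 0" and "\<And>z. z \<in> K \<Longrightarrow> inner (z - \<zeta>) a \<le> 0"
  shows "outer_normal K \<zeta> (sgn a)"
  using assms by (auto simp: outer_normal_iff_inner sgn_div_norm norm_divide intro!: mult_nonneg_nonpos)

lemma outer_normal_exists: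
  fixes K :: "complex set"
  assumes "convex K" "interior K \<noteq> {}" "\<zeta> \<in> K" "\<zeta> \<notin> interior K"
  obtains \<nu> where "outer_normal K \<zeta> \<nu>"
proof -
  have "\<zeta> \<notin> rel_interior K"
    using assms(2,4) by (simp add: rel_interior_nonempty_interior)
  then obtain a where "a \<noteq> 0" and a: "\<And>z. z \<in> K \<Longrightarrow> inner a \<zeta> \<le> inner a z"
    using supporting_hyperplane_rel_boundary[OF assms(1,3)] by metis
  have "outer_normal K \<zeta> (sgn (- a))"
    using \<open>a \<noteq> 0\<close> a by (intro outer_normal_sgnI) (auto simp: inner_diff_right inner_commute)
  then show thesis by (rule that)
qed

lemma outer_normals_opposite_imp_interior_empty:
  assumes "outer_normal K \<zeta> \<nu>" and "outer_normal K \<zeta> (- \<nu>)"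
  shows "interior K = {}"
proof
  show "interior K \<subseteq> {}"
  proof
    fix x assume "x \<in> interior K"
    then obtain e where "e > 0" and "ball x e \<subseteq> K"
      by (meson mem_interior)
    have "norm \<nu> = 1"
      using assms(1) by (simp add: outer_normal_def)
    then have "x + (e/2) *\<^sub>R \<nu> \<in> ball x e"
      using \<open>e > 0\<close> by (simp add: dist_norm)
    then have "x \<in> K" "x + (e/2) *\<^sub>R \<nu> \<in> K"
      using \<open>e > 0\<close> \<open>ball x e \<subseteq> K\<close> by auto
    then have "inner (x - \<zeta>) \<nu> \<le> 0" "inner (x - \<zeta>) (- \<nu>) \<le> 0"
        "inner (x + (e/2) *\<^sub>R \<nu> - \<zeta>) \<nu> \<le> 0"
      using assms unfolding outer_normal_iff_inner by blast+
    moreover have "inner \<nu> \<nu> = 1"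
      using \<open>norm \<nu> = 1\<close> by (simp add: dot_square_norm)
    ultimately show "x \<in> {}"
      using \<open>e > 0\<close> by (simp add: inner_diff_left inner_add_left)
  qed
qed simp

lemma normal_lines_eq_imp_normals_eq_or_opposite:
  assumes "norm \<mu> = 1" "norm \<nu> = 1"
    and "{z. Re ((z - \<zeta>) * cnj \<mu>) = 0} = {z. Re ((z - \<zeta>) * cnj \<nu>) = 0}"
  shows "\<nu> = \<mu> \<or> \<nu> = - \<mu>"
proof -
  have "\<zeta> + \<i> * \<mu> \<in> {z. Re ((z - \<zeta>) * cnj \<mu>) = 0}"
    by simp
  then have "\<zeta> + \<i> * \<mu> \<in> {z. Re ((z - \<zeta>) * cnj \<nu>) = 0}"
    unfolding assms(3) .
  then have "Im (\<mu> * cnj \<nu>) = 0"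
    by (simp add: mult.assoc)
  moreover have "norm (\<mu> * cnj \<nu>) = 1"
    using assms(1,2) by (simp add: norm_mult)
  ultimately have "\<mu> * cnj \<nu> = 1 \<or> \<mu> * cnj \<nu> = -1"
    by (auto simp: complex_eq_iff cmod_eq_Re abs_if split: if_splits)
  moreover have "\<mu> = (\<mu> * cnj \<nu>) * \<nu>"
    using assms(2) by (simp add: mult.assoc complex_norm_square[symmetric] mult.commute[of "cnj \<nu>"])
  ultimately show ?thesis
    by (metis mult_1 mult_minus1 minus_minus)
qed

lemma smooth_outer_normal_unique:
  assumes "smooth_convex_domain K" "\<zeta> \<in> frontier K"
    and "outer_normal K \<zeta> \<mu>" "outer_normal K \<zeta> \<nu>"
  shows "\<nu> = \<mu>"
proof -
  have "supporting_line K \<zeta> {z. Re ((z - \<zeta>) * cnj \<mu>) = 0}"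
       "supporting_line K \<zeta> {z. Re ((z - \<zeta>) * cnj \<nu>) = 0}"
    using assms(3,4) unfolding supporting_line_def outer_normal_def by blast+
  moreover have "\<exists>!L. supporting_line K \<zeta> L"
    using assms(1,2) by (simp add: smooth_convex_domain_def)
  ultimately have "{z. Re ((z - \<zeta>) * cnj \<mu>) = 0} = {z. Re ((z - \<zeta>) * cnj \<nu>) = 0}"
    by blast
  then have "\<nu> = \<mu> \<or> \<nu> = - \<mu>"
    using assms(3,4) by (intro normal_lines_eq_imp_normals_eq_or_opposite) (auto simp: outer_normal_def)
  moreover have "interior K \<noteq> {}"
    using assms(1) by (simp add: smooth_convex_domain_def convex_domain_def)
  ultimately show ?thesis
    using outer_normals_opposite_imp_interior_empty assms(3,4) by blast
qed

lemma smooth_inward_normal_meets_interior: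
  assumes sm: "smooth_convex_domain K" and \<zeta>: "\<zeta> \<in> frontier K" and \<mu>: "outer_normal K \<zeta> \<mu>"
  obtains s where "s > 0" "\<zeta> - of_real s * \<mu> \<in> interior K"
proof -
  have cvx: "convex K" and int: "interior K \<noteq> {}" and "closed K"
    using sm by (auto simp: smooth_convex_domain_def convex_domain_def compact_imp_closed)
  then have "\<zeta> \<in> K" "\<zeta> \<notin> interior K"
    using \<zeta> frontier_subset_closed by (auto simp: frontier_def)
  show thesis
  proof (rule ccontr)
    assume "\<not> thesis"
    with that have none: "\<zeta> - of_real s * \<mu> \<notin> interior K" if "s > 0" for s
      using \<open>s > 0\<close> by blast
    have "interior K \<inter> closed_segment \<zeta> (\<zeta> - \<mu>) = {}"
    proof -
      have "\<zeta> - of_real u * \<mu> \<notin> interior K" if "0 \<le> u" for u :: real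
        using that none \<open>\<zeta> \<notin> interior K\<close> by (cases "u = 0") auto
      moreover have "(1 - u) *\<^sub>R \<zeta> + u *\<^sub>R (\<zeta> - \<mu>) = \<zeta> - of_real u * \<mu>" for u
        by (simp add: scaleR_conv_of_real algebra_simps)
      ultimately show ?thesis
        unfolding closed_segment_def by auto
    qed
    then obtain a b where "a \<noteq> 0" and a_int: "\<forall>x\<in>interior K. inner a x \<le> b"
      and a_seg: "\<forall>x\<in>closed_segment \<zeta> (\<zeta> - \<mu>). b \<le> inner a x"
      using separating_hyperplane_sets[OF convex_interior[OF cvx] convex_closed_segment int]
      by blast
    have "closure (interior K) \<subseteq> {x. inner a x \<le> b}"
      using a_int by (intro closure_minimal) (auto simp: closed_halfspace_le)
    then have a_K: "\<forall>x\<in>K. inner a x \<le> b"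
      using convex_closure_interior[OF cvx int] closure_subset by blast
    then have "inner a \<zeta> = b"
      using a_seg \<open>\<zeta> \<in> K\<close> by (metis ends_in_segment(1) order_antisym)
    then have "inner a \<mu> \<le> 0"
      using bspec[OF a_seg ends_in_segment(2)] by (simp add: inner_diff_right)
    have "outer_normal K \<zeta> (sgn a)"
      using \<open>a \<noteq> 0\<close> a_K \<open>inner a \<zeta> = b\<close>
      by (intro outer_normal_sgnI) (auto simp: inner_diff_right inner_commute[of _ a])
    then have "\<mu> = sgn a"
      using smooth_outer_normal_unique[OF sm \<zeta> \<mu>] by blast
    then have "inner a \<mu> = norm a"
      using \<open>a \<noteq> 0\<close> by (simp add: sgn_div_norm dot_square_norm power2_eq_square)
    then show False
      using \<open>inner a \<mu> \<le> 0\<close> \<open>a \<noteq> 0\<close> by simp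
  qed
qed

lemma convex_ray_point_mem:
  fixes K :: "complex set"
  assumes "convex K" "\<zeta> \<in> K" "\<zeta> - of_real s * \<mu> \<in> K" "0 \<le> t" "t \<le> s"
  shows "\<zeta> - of_real t * \<mu> \<in> K"
proof -
  have "\<zeta> - of_real t * \<mu> \<in> closed_segment \<zeta> (\<zeta> - of_real s * \<mu>)"
  proof (cases "s = 0")
    case False
    with assms(4,5) show ?thesis
      unfolding closed_segment_def
      by (intro CollectI exI[of _ "t / s"]) (auto simp: scaleR_conv_of_real algebra_simps)
  qed (use assms in auto)
  then show ?thesis
    using closed_segment_subset[OF assms(2,3,1)] by blast
qed

lemma closed_outer_normal_pairs: "closed {(\<zeta>, \<nu>). outer_normal K \<zeta> \<nu>}"
proof -
  have "{(\<zeta>, \<nu>). outer_normal K \<zeta> \<nu>} =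
      {p. norm (snd p) = 1} \<inter> (\<Inter>z\<in>K. {p. Re ((z - fst p) * cnj (snd p)) \<le> 0})"
    by (auto simp: outer_normal_def)
  then show ?thesis
    by (simp only:) (intro closed_Int closed_INT ballI closed_Collect_eq closed_Collect_le continuous_intros)
qed

lemma smooth_convex_domain_uniform_inward_step:
  assumes sm: "smooth_convex_domain K"
  obtains s where "s > 0" "\<forall>\<zeta>\<in>frontier K. \<forall>\<nu>. outer_normal K \<zeta> \<nu> \<longrightarrow> \<zeta> - of_real s * \<nu> \<in> K"
proof -
  have "compact K" "convex K"
    using sm by (auto simp: smooth_convex_domain_def convex_domain_def)
  define N where "N = (frontier K \<times> sphere 0 1) \<inter> {(\<zeta>, \<nu>). outer_normal K \<zeta> \<nu>}"
  have "compact N"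
    unfolding N_def using \<open>compact K\<close> closed_outer_normal_pairs
    by (intro compact_Int_closed compact_Times compact_frontier compact_sphere)
  have inward: "\<forall>p\<in>N. \<exists>s. s > 0 \<and> fst p - of_real s * snd p \<in> interior K"
  proof
    fix p assume "p \<in> N"
    have "fst p \<in> frontier K" "outer_normal K (fst p) (snd p)"
      using \<open>p \<in> N\<close> by (auto simp: N_def)
    then show "\<exists>s. s > 0 \<and> fst p - of_real s * snd p \<in> interior K"
      by (rule smooth_inward_normal_meets_interior[OF sm]) blast
  qed
  obtain r where r: "\<forall>p\<in>N. r p > 0 \<and> fst p - of_real (r p) * snd p \<in> interior K"
    using bchoice[OF inward] by blast
  define U where "U p = (\<lambda>q. fst q - of_real (r p) * snd q) -` interior K" for p
  have "open (U p)" for p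
    unfolding U_def by (intro continuous_open_vimage open_interior continuous_intros)
  moreover have "N \<subseteq> (\<Union>p\<in>N. U p)"
    using r by (auto simp: U_def)
  ultimately obtain F where "F \<subseteq> N" "finite F" and F: "N \<subseteq> (\<Union>p\<in>F. U p)"
    by (rule compactE_image[OF \<open>compact N\<close>])
  \<comment> \<open>\<open>insert 1\<close> keeps the minimum meaningful when \<open>F\<close> is empty\<close>
  define s where "s = Min (insert 1 (r ` F))"
  have "r p > 0" if "p \<in> F" for p
    using r that \<open>F \<subseteq> N\<close> by blast
  then have "s > 0"
    using \<open>finite F\<close> by (simp add: s_def Min_gr_iff)
  moreover have "\<forall>\<zeta>\<in>frontier K. \<forall>\<nu>. outer_normal K \<zeta> \<nu> \<longrightarrow> \<zeta> - of_real s * \<nu> \<in> K"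
  proof (intro ballI allI impI)
    fix \<zeta> \<nu> assume "\<zeta> \<in> frontier K" "outer_normal K \<zeta> \<nu>"
    then have "(\<zeta>, \<nu>) \<in> N"
      by (simp add: N_def outer_normal_def)
    then obtain p where "p \<in> F" "(\<zeta>, \<nu>) \<in> U p"
      using F by blast
    then have "\<zeta> - of_real (r p) * \<nu> \<in> K"
      using interior_subset by (auto simp: U_def)
    moreover have "\<zeta> \<in> K"
      using \<open>\<zeta> \<in> frontier K\<close> \<open>compact K\<close> frontier_subset_closed compact_imp_closed by blast
    moreover have "s \<le> r p"
      using \<open>finite F\<close> \<open>p \<in> F\<close> by (simp add: s_def)
    ultimately show "\<zeta> - of_real s * \<nu> \<in> K"
      using convex_ray_point_mem[OF \<open>convex K\<close>] \<open>s > 0\<close> by simp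
  qed
  ultimately show thesis
    using that by blast
qed

lemma normal_line_Int_eq_segment:
  fixes K :: "complex set"
  assumes "compact K" "convex K" "\<zeta> \<in> K" and \<nu>: "outer_normal K \<zeta> \<nu>"
  obtains h where "h \<ge> 0"
    "{\<zeta> + complex_of_real t * \<nu> | t. True} \<inter> K = closed_segment \<zeta> (\<zeta> - complex_of_real h * \<nu>)"
proof -
  have unit: "norm \<nu> = 1"
    using \<nu> by (simp add: outer_normal_def)
  define f where "f = (\<lambda>t::real. \<zeta> + complex_of_real t * \<nu>)"
  define T where "T = f -` K"
  have f_eq: "f = (\<lambda>t. \<zeta> + t *\<^sub>R \<nu>)"
    by (simp add: f_def scaleR_conv_of_real)
  have T_nonpos: "t \<le> 0" if "t \<in> T" for t
  proof -
    have "inner (t *\<^sub>R \<nu>) \<nu> \<le> 0"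
      using \<nu> that by (auto simp: T_def f_eq outer_normal_iff_inner)
    then show ?thesis
      using unit by (simp add: dot_square_norm)
  qed
  have "convex T"
    unfolding convex_def T_def
  proof clarsimp
    fix x y u v :: real
    assume "f x \<in> K" "f y \<in> K" "0 \<le> u" "0 \<le> v" "u + v = 1"
    have "f (u * x + v * y) = (u + v) *\<^sub>R \<zeta> + (u * x + v * y) *\<^sub>R \<nu>"
      using \<open>u + v = 1\<close> by (simp add: f_eq)
    also have "\<dots> = u *\<^sub>R f x + v *\<^sub>R f y"
      by (simp add: f_eq algebra_simps)
    finally show "f (u * x + v * y) \<in> K"
      using convexD[OF \<open>convex K\<close> \<open>f x \<in> K\<close> \<open>f y \<in> K\<close>] \<open>0 \<le> u\<close> \<open>0 \<le> v\<close> \<open>u + v = 1\<close>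
      by simp
  qed
  moreover have "closed T"
    unfolding T_def f_eq
    by (intro continuous_closed_vimage compact_imp_closed \<open>compact K\<close> continuous_intros)
  moreover have "bounded T"
  proof (rule bounded_subset[OF bounded_closed_interval])
    show "T \<subseteq> {- diameter K..diameter K}"
    proof
      fix t assume "t \<in> T"
      then have "dist \<zeta> (f t) \<le> diameter K"
        using assms(1,3) by (intro diameter_bounded_bound compact_imp_bounded) (auto simp: T_def)
      then show "t \<in> {- diameter K..diameter K}"
        using unit by (simp add: f_def dist_norm norm_mult abs_le_iff)
    qed
  qed
  ultimately have "connected T \<and> compact T"
    by (simp add: convex_connected compact_eq_bounded_closed)
  then obtain a b where ab: "T = {a..b}"
    using connected_compact_interval_1 by blast
  have "0 \<in> T"
    using assms(3) by (simp add: T_def f_def)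
  then have "b = 0"
    using T_nonpos[of b] ab by auto
  have "{\<zeta> + complex_of_real t * \<nu> | t. True} \<inter> K = f ` T"
    by (auto simp: T_def f_def)
  also have "\<dots> = f ` closed_segment 0 a"
    using \<open>0 \<in> T\<close> by (simp add: ab \<open>b = 0\<close> closed_segment_eq_real_ivl)
  also have "\<dots> = closed_segment (f 0) (f a)"
    using closed_segment_translation[of \<zeta> 0 "a *\<^sub>R \<nu>"]
      closed_segment_linear_image[where f="\<lambda>t. t *\<^sub>R \<nu>" and a=0 and b=a, OF linear_scaleR_left]
    by (simp add: f_eq image_image)
  also have "\<dots> = closed_segment \<zeta> (\<zeta> - complex_of_real (- a) * \<nu>)"
    by (simp add: f_def)
  finally show thesis
    using that[of "- a"] \<open>0 \<in> T\<close> ab by simp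
qed

lemma local_depth_ge_inward_step:
  fixes K :: "complex set"
  assumes "compact K" "convex K" "\<zeta> \<in> K" "outer_normal K \<zeta> \<mu>"
    and inward: "\<And>\<nu>. outer_normal K \<zeta> \<nu> \<Longrightarrow> \<zeta> - of_real s * \<nu> \<in> K"
  shows "s \<le> local_depth K \<zeta>"
proof -
  define H where "H = {h. h \<ge> 0 \<and> (\<exists>\<nu>. outer_normal K \<zeta> \<nu> \<and>
      {\<zeta> + complex_of_real t * \<nu> | t. True} \<inter> K = closed_segment \<zeta> (\<zeta> - complex_of_real h * \<nu>))}"
  have bounds: "s \<le> h \<and> h \<le> diameter K" if "h \<in> H" for h
  proof -
    obtain \<nu> where "h \<ge> 0" "outer_normal K \<zeta> \<nu>" and
      seg: "{\<zeta> + complex_of_real t * \<nu> | t. True} \<inter> K = closed_segment \<zeta> (\<zeta> - complex_of_real h * \<nu>)"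
      using \<open>h \<in> H\<close> by (auto simp: H_def)
    then have "norm \<nu> = 1"
      by (simp add: outer_normal_def)
    have "\<zeta> - of_real s * \<nu> = \<zeta> + complex_of_real (- s) * \<nu>"
      by simp
    then have "\<zeta> - of_real s * \<nu> \<in> closed_segment \<zeta> (\<zeta> - complex_of_real h * \<nu>)"
      using inward[OF \<open>outer_normal K \<zeta> \<nu>\<close>] seg by blast
    then have "dist (\<zeta> - of_real s * \<nu>) \<zeta> \<le> dist \<zeta> (\<zeta> - complex_of_real h * \<nu>)"
      using dist_in_closed_segment by blast
    moreover have "dist \<zeta> (\<zeta> - complex_of_real h * \<nu>) \<le> diameter K"
      using seg assms(1,3) by (intro diameter_bounded_bound compact_imp_bounded) auto
    ultimately show ?thesis
      using \<open>norm \<nu> = 1\<close> \<open>h \<ge> 0\<close> by (simp add: dist_norm norm_mult)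
  qed
  obtain h where "h \<ge> 0"
    "{\<zeta> + complex_of_real t * \<mu> | t. True} \<inter> K = closed_segment \<zeta> (\<zeta> - complex_of_real h * \<mu>)"
    using normal_line_Int_eq_segment[OF assms(1-4)] .
  then have "h \<in> H"
    using assms(4) by (auto simp: H_def)
  moreover have "bdd_above H"
    using bounds by (intro bdd_aboveI[of _ "diameter K"]) blast
  ultimately have "s \<le> Sup H"
    using bounds by (meson cSup_upper order_trans)
  then show ?thesis
    by (simp add: local_depth_def H_def)
qed

theorem corollary1:
  fixes K :: "complex set"
  assumes "smooth_convex_domain K"
  shows "depth K > 0"
proof -
  have K: "compact K" "convex K" "interior K \<noteq> {}"
    using assms by (auto simp: smooth_convex_domain_def convex_domain_def)
  obtain s where "s > 0" and
    inward: "\<forall>\<zeta>\<in>frontier K. \<forall>\<nu>. outer_normal K \<zeta> \<nu> \<longrightarrow> \<zeta> - of_real s * \<nu> \<in> K"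
    using smooth_convex_domain_uniform_inward_step[OF assms] by blast
  have "s \<le> local_depth K \<zeta>" if "\<zeta> \<in> frontier K" for \<zeta>
  proof -
    have "\<zeta> \<in> K" "\<zeta> \<notin> interior K"
      using that K(1) by (auto simp: frontier_def closure_closed compact_imp_closed)
    then obtain \<mu> where "outer_normal K \<zeta> \<mu>"
      using outer_normal_exists[OF K(2,3)] by blast
    then show ?thesis
      by (rule local_depth_ge_inward_step[OF K(1,2) \<open>\<zeta> \<in> K\<close>]) (use inward that in blast)
  qed
  moreover have "frontier K \<noteq> {}"
  proof (rule frontier_not_empty)
    show "K \<noteq> {}"
      using K(3) interior_subset by blast
    show "K \<noteq> UNIV"
      using K(1) compact_imp_bounded not_bounded_UNIV by blast
  qed
  ultimately have "s \<le> depth K"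
    unfolding depth_def by (intro cInf_greatest) auto
  then show ?thesis
    using \<open>s > 0\<close> by simp
qed

end
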